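(* Let $D\ge1$, $P>0$, $\sigma_1^2,\sigma_2^2>0$, $\alpha_k>0$, $\beta_k>0$ for $k=1,\dots,D$, let $d_k\ge0$ be fixed with at least one $d_k>0$, and let $\varepsilon\in[0,1)$ be fixed. Consider the problem $$\max_{q_1,\dots,q_D\ge0}\;\frac{1-\varepsilon}{2}\sum_{k=1}^D\log_2\frac{\left(1+\frac{\alpha_k}{\sigma_1^2}q_k\right)\left(1+\frac{\beta_k}{\sigma_2^2}d_k\right)}{1+\frac{\alpha_k}{\sigma_1^2}q_k+\frac{\beta_k}{\sigma_2^2}d_k}\quad\text{s.t.}\quad\sum_{k=1}^D q_k\le P.$$ This problem is convex (the objective is concave in $(q_1,\dots,q_D)$), and for $\mu_2>0$ define $$q_k(\mu_2)=\frac{\sigma_1^2}{2\alpha_k}\left[\sqrt{\left(\frac{\beta_k}{\sigma_2^2}d_k\right)^2+\frac{2(1-\varepsilon)\beta_kd_k\alpha_k\mu_2}{\sigma_1^2\sigma_2^2\ln2}}-\frac{\beta_k}{\sigma_2^2}d_k-2\right]^+.$$ Then there exists $\mu_2^*>0$ with $\sum_{k=1}^D q_k(\mu_2^* )=P$, and for any such $\mu_2^*$ the vector $(q_1(\mu_2^* ),\dots,q_D(\mu_2^* ))$ is an optimal solution of the problem.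
   Context: This is the subproblem, with relay variables $d_k$ and time-switching ratio $\varepsilon$ fixed, of the joint source/relay/TS-ratio design for an energy-harvesting MIMO relay: $q_k$ is the power allocated by the source to the $k$-th eigenmode, $P$ the source power budget, $\alpha_k,\beta_k$ the squared singular values of the source–relay and relay–destination channels, and $\sigma_1^2,\sigma_2^2$ the noise variances at relay and destination. $(a)^+=\max\{0,a\}$. *)

theory Defs
  imports "HOL-Analysis.Analysis"
begin

text \<open>Eigenmodes are indexed by a finite type 'n with D = CARD('n).
  s1, s2 denote the noise variances sigma_1^2, sigma_2^2.\<close>

definition rate ::
  "real \<Rightarrow> real \<Rightarrow> real \<Rightarrow> real^'n \<Rightarrow> real^'n \<Rightarrow> real^'n \<Rightarrow> real^'n \<Rightarrow> real" where
  "rate eps s1 s2 \<alpha> \<beta> d q =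
     (1 - eps) / 2 *
     (\<Sum>k\<in>UNIV. log 2 (((1 + \<alpha>$k / s1 * q$k) * (1 + \<beta>$k / s2 * d$k)) /
                        (1 + \<alpha>$k / s1 * q$k + \<beta>$k / s2 * d$k)))"

definition feasible :: "real \<Rightarrow> real^'n \<Rightarrow> bool" where
  "feasible P q \<longleftrightarrow> (\<forall>k. 0 \<le> q$k) \<and> (\<Sum>k\<in>UNIV. q$k) \<le> P"

definition qmu ::
  "real \<Rightarrow> real \<Rightarrow> real \<Rightarrow> real^'n \<Rightarrow> real^'n \<Rightarrow> real^'n \<Rightarrow> real \<Rightarrow> real^'n" where
  "qmu eps s1 s2 \<alpha> \<beta> d \<mu> = (\<chi> k.
     s1 / (2 * \<alpha>$k) *
     max 0 (sqrt ((\<beta>$k / s2 * d$k)^2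
                  + 2 * (1 - eps) * \<beta>$k * d$k * \<alpha>$k * \<mu> / (s1 * s2 * ln 2))
            - \<beta>$k / s2 * d$k - 2))"

end

theory Submission
  imports Defs
begin

text \<open>Each summand of the rate is, up to the factor (1 - eps)/(2 ln 2), the function
  x \<mapsto> ln (1 + a x) + ln (1 + B) - ln (1 + a x + B) of the source power x of one eigenmode,
  with a = alpha/s1 and B the (fixed) relay SNR. It is concave because its derivative
  a B / ((1 + a x)(1 + a x + B)) decreases. The closed form q_k(mu) solves the stationarity
  condition c a B / ((1 + a x)(1 + a x + B)) = 1/mu, clipped at 0; hence it maximises
  each summand of the Lagrangian, and once the budget is met with equality that suffices for
  optimality. The budget sum is continuous in mu, vanishes at 0 and is unbounded because
  some d_k > 0, so the intermediate value theorem yields the multiplier.\<close>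

lemma concave_on_cong:
  assumes "S = T" "\<And>x. x \<in> T \<Longrightarrow> f x = g x"
  shows "concave_on S f \<longleftrightarrow> concave_on T g"
  using assms by (auto simp: concave_on_iff convex_def)

lemma concave_on_sum_components:
  fixes f :: "'n::finite \<Rightarrow> real \<Rightarrow> real"
  assumes "\<And>k. concave_on S (f k)"
  shows "concave_on {q::real^'n. \<forall>k. q $ k \<in> S} (\<lambda>q. \<Sum>k\<in>UNIV. f k (q $ k))"
proof -
  have "convex S" using assms concave_on_imp_convex by blast
  have concave: "u * f k x + v * f k y \<le> f k (u * x + v * y)"
    if "x \<in> S" "y \<in> S" "0 \<le> u" "0 \<le> v" "u + v = 1" for k x y u v
    using assms[of k] that unfolding concave_on_iff by simp
  show ?thesis
    unfolding concave_on_iff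
  proof (intro conjI ballI allI impI convexI)
    fix x y :: "real^'n" and u v :: real
    assume "x \<in> {q. \<forall>k. q $ k \<in> S}" "y \<in> {q. \<forall>k. q $ k \<in> S}" "0 \<le> u" "0 \<le> v" "u + v = 1"
    then have components: "x $ k \<in> S" "y $ k \<in> S" for k by auto
    show "u *\<^sub>R x + v *\<^sub>R y \<in> {q. \<forall>k. q $ k \<in> S}"
      using convexD[OF \<open>convex S\<close> components \<open>0 \<le> u\<close> \<open>0 \<le> v\<close> \<open>u + v = 1\<close>] by simp
    have "u * (\<Sum>k\<in>UNIV. f k (x $ k)) + v * (\<Sum>k\<in>UNIV. f k (y $ k))
        = (\<Sum>k\<in>UNIV. u * f k (x $ k) + v * f k (y $ k))"
      by (simp add: sum_distrib_left sum.distrib)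
    also have "\<dots> \<le> (\<Sum>k\<in>UNIV. f k ((u *\<^sub>R x + v *\<^sub>R y) $ k))"
      using concave[OF components \<open>0 \<le> u\<close> \<open>0 \<le> v\<close> \<open>u + v = 1\<close>] by (simp add: sum_mono)
    finally show "u * (\<Sum>k\<in>UNIV. f k (x $ k)) + v * (\<Sum>k\<in>UNIV. f k (y $ k))
        \<le> (\<Sum>k\<in>UNIV. f k ((u *\<^sub>R x + v *\<^sub>R y) $ k))" .
  qed
qed

lemma lagrangian_maximizer_optimal:
  fixes f :: "'i \<Rightarrow> real \<Rightarrow> real"
  assumes "finite I" "\<mu> > 0"
    and "\<And>k x. k \<in> I \<Longrightarrow> 0 \<le> x \<Longrightarrow> f k x - x / \<mu> \<le> f k (w k) - w k / \<mu>"
    and "\<And>k. k \<in> I \<Longrightarrow> 0 \<le> q k" "(\<Sum>k\<in>I. q k) \<le> (\<Sum>k\<in>I. w k)"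
  shows "(\<Sum>k\<in>I. f k (q k)) \<le> (\<Sum>k\<in>I. f k (w k))"
proof -
  have "(\<Sum>k\<in>I. f k (q k)) - (\<Sum>k\<in>I. q k) / \<mu> \<le> (\<Sum>k\<in>I. f k (w k)) - (\<Sum>k\<in>I. w k) / \<mu>"
    using sum_mono[of I "\<lambda>k. f k (q k) - q k / \<mu>" "\<lambda>k. f k (w k) - w k / \<mu>"] assms(3,4)
    by (simp add: sum_subtractf sum_divide_distrib)
  moreover have "(\<Sum>k\<in>I. q k) / \<mu> \<le> (\<Sum>k\<in>I. w k) / \<mu>"
    using assms(2,5) by (simp add: divide_right_mono)
  ultimately show ?thesis by linarith
qed

definition af_rate :: "real \<Rightarrow> real \<Rightarrow> real \<Rightarrow> real" where
  "af_rate a B x = ln (1 + a * x) + ln (1 + B) - ln (1 + a * x + B)"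

definition af_rate_deriv :: "real \<Rightarrow> real \<Rightarrow> real \<Rightarrow> real" where
  "af_rate_deriv a B x = a * B / ((1 + a * x) * (1 + a * x + B))"

lemma af_rate_has_derivative:
  assumes "a > 0" "B \<ge> 0" "x > -1/a"
  shows "(af_rate a B has_real_derivative af_rate_deriv a B x) (at x)"
proof -
  have pos: "1 + a * x > 0" using assms by (simp add: field_simps)
  then have "(af_rate a B has_real_derivative a / (1 + a * x) - a / (1 + a * x + B)) (at x)"
    unfolding af_rate_def using \<open>B \<ge> 0\<close> by (auto intro!: derivative_eq_intros)
  moreover have "a / (1 + a * x) - a / (1 + a * x + B) = af_rate_deriv a B x"
    unfolding af_rate_deriv_def using pos \<open>B \<ge> 0\<close> by (simp add: field_simps)
  ultimately show ?thesis by simp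
qed

lemma af_rate_deriv_antimono:
  assumes "a > 0" "B \<ge> 0" "x > -1/a" "x \<le> y"
  shows "af_rate_deriv a B y \<le> af_rate_deriv a B x"
proof -
  have pos: "1 + a * x > 0" using assms by (simp add: field_simps)
  then have px: "(1 + a * x) * (1 + a * x + B) > 0" using \<open>B \<ge> 0\<close> by simp
  have "1 + a * x \<le> 1 + a * y" using assms by simp
  then have le: "(1 + a * x) * (1 + a * x + B) \<le> (1 + a * y) * (1 + a * y + B)"
    using pos \<open>B \<ge> 0\<close> by (intro mult_mono) auto
  moreover have "(1 + a * y) * (1 + a * y + B) > 0" using px le by linarith
  ultimately show ?thesis
    unfolding af_rate_deriv_def using assms px by (intro divide_left_mono) simp_all
qed

lemma concave_on_af_rate:
  assumes "a > 0" "B \<ge> 0"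
  shows "concave_on {-1/a<..} (af_rate a B)"
  unfolding concave_on_def
proof (rule convex_on_realI[where f' = "\<lambda>x. - af_rate_deriv a B x"])
  show "((\<lambda>x. - af_rate a B x) has_real_derivative - af_rate_deriv a B x) (at x)"
    if "x \<in> {-1/a<..}" for x
    using that assms by (intro DERIV_minus af_rate_has_derivative) auto
  show "- af_rate_deriv a B x \<le> - af_rate_deriv a B y"
    if "x \<in> {-1/a<..}" "y \<in> {-1/a<..}" "x \<le> y" for x y
    using that assms by (simp add: af_rate_deriv_antimono)
qed simp

lemma af_rate_le_tangent:
  assumes "a > 0" "B \<ge> 0" "c > -1/a" "x > -1/a"
  shows "af_rate a B x \<le> af_rate a B c + af_rate_deriv a B c * (x - c)"
proof -
  have convex: "convex_on {-1/a<..} (\<lambda>x. - af_rate a B x)"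
    using concave_on_af_rate[OF assms(1,2)] by (simp add: concave_on_def)
  have deriv: "((\<lambda>x. - af_rate a B x) has_real_derivative - af_rate_deriv a B c) (at c within {-1/a<..})"
    by (rule has_field_derivative_at_within[OF DERIV_minus[OF af_rate_has_derivative[OF assms(1-3)]]])
  have "- af_rate a B x - - af_rate a B c \<ge> - af_rate_deriv a B c * (x - c)"
    using assms(3,4) by (intro convex_on_imp_above_tangent[OF convex _ _ _ deriv]) (simp_all add: interior_open)
  then show ?thesis by (simp add: algebra_simps)
qed

definition af_water_level :: "real \<Rightarrow> real \<Rightarrow> real \<Rightarrow> real \<Rightarrow> real" where
  "af_water_level a B c \<mu> = 1 / (2 * a) * max 0 (sqrt (B\<^sup>2 + 4 * c * a * B * \<mu>) - B - 2)"

lemma af_water_level_nonneg: "a > 0 \<Longrightarrow> 0 \<le> af_water_level a B c \<mu>"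
  by (simp add: af_water_level_def)

lemma af_water_level_zero: "B \<ge> 0 \<Longrightarrow> af_water_level a B c 0 = 0"
  by (simp add: af_water_level_def)

lemma af_water_level_unbounded:
  assumes "a > 0" "B > 0" "c > 0"
  shows "P \<le> af_water_level a B c ((2 * a * P + B + 2)\<^sup>2 / (4 * c * a * B))"
proof -
  let ?T = "2 * a * P + B + 2"
  have "4 * c * a * B \<noteq> 0" using assms by simp
  then have radicand: "B\<^sup>2 + 4 * c * a * B * (?T\<^sup>2 / (4 * c * a * B)) = B\<^sup>2 + ?T\<^sup>2"
    by simp
  have "?T \<le> sqrt (B\<^sup>2 + ?T\<^sup>2)"
    by (rule real_le_rsqrt) simp
  then have "2 * a * P \<le> max 0 (sqrt (B\<^sup>2 + ?T\<^sup>2) - B - 2)"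
    by (intro max.coboundedI2) linarith
  then have "1 / (2 * a) * (2 * a * P) \<le> af_water_level a B c (?T\<^sup>2 / (4 * c * a * B))"
    unfolding af_water_level_def radicand using \<open>a > 0\<close> by (intro mult_left_mono) simp_all
  then show ?thesis using \<open>a > 0\<close> by simp
qed

lemma af_water_level_stationary:
  assumes "a > 0" "B \<ge> 0" "c > 0" "\<mu> > 0" "af_water_level a B c \<mu> > 0"
  shows "c * af_rate_deriv a B (af_water_level a B c \<mu>) = 1 / \<mu>"
proof -
  define S where "S = sqrt (B\<^sup>2 + 4 * c * a * B * \<mu>)"
  have S2: "S\<^sup>2 = B\<^sup>2 + 4 * c * a * B * \<mu>"
    unfolding S_def using assms by simp
  have "S - B - 2 > 0"
    using assms(1,5) unfolding af_water_level_def S_def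
    by (auto simp: max_def zero_less_divide_iff split: if_splits)
  then have level: "1 + a * af_water_level a B c \<mu> = (S - B) / 2"
    using \<open>a > 0\<close> unfolding af_water_level_def S_def by (simp add: field_simps)
  have "(1 + a * af_water_level a B c \<mu>) * (1 + a * af_water_level a B c \<mu> + B) = (S\<^sup>2 - B\<^sup>2) / 4"
    unfolding level by (simp add: field_simps power2_eq_square)
  then have prod: "(1 + a * af_water_level a B c \<mu>) * (1 + a * af_water_level a B c \<mu> + B) = c * a * B * \<mu>"
    using S2 by simp
  have "B \<noteq> 0"
    using \<open>S - B - 2 > 0\<close> S2 unfolding S_def by auto
  then show ?thesis
    unfolding af_rate_deriv_def prod using assms by simp
qed

lemma af_water_level_slack:
  assumes "a > 0" "B \<ge> 0" "c > 0" "\<mu> > 0" "af_water_level a B c \<mu> = 0"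
  shows "c * af_rate_deriv a B 0 \<le> 1 / \<mu>"
proof -
  define S where "S = sqrt (B\<^sup>2 + 4 * c * a * B * \<mu>)"
  have "S \<le> B + 2"
    using assms(1,5) unfolding af_water_level_def S_def by (auto simp: max_def split: if_splits)
  then have "S\<^sup>2 \<le> (B + 2)\<^sup>2"
    unfolding S_def by (intro power_mono) (use assms in simp_all)
  then have "c * a * B * \<mu> \<le> 1 + B"
    unfolding S_def using assms by (simp add: power2_eq_square algebra_simps)
  then show ?thesis
    unfolding af_rate_deriv_def using assms by (simp add: field_simps)
qed

lemma af_water_level_maximizes_lagrangian:
  assumes "a > 0" "B \<ge> 0" "c > 0" "\<mu> > 0" "x \<ge> 0"
  defines "w \<equiv> af_water_level a B c \<mu>"
  shows "c * af_rate a B x - x / \<mu> \<le> c * af_rate a B w - w / \<mu>"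
proof -
  have "w \<ge> 0" unfolding w_def using assms by (simp add: af_water_level_nonneg)
  have "-1/a < 0" using \<open>a > 0\<close> by simp
  then have "-1/a < w" "-1/a < x" using \<open>w \<ge> 0\<close> \<open>x \<ge> 0\<close> by linarith+
  then have "af_rate a B x \<le> af_rate a B w + af_rate_deriv a B w * (x - w)"
    using assms(1,2) by (intro af_rate_le_tangent)
  then have "c * af_rate a B x \<le> c * (af_rate a B w + af_rate_deriv a B w * (x - w))"
    using \<open>c > 0\<close> by (simp add: mult_left_mono)
  then have "c * af_rate a B x \<le> c * af_rate a B w + c * af_rate_deriv a B w * (x - w)"
    by (simp add: algebra_simps)
  moreover have "c * af_rate_deriv a B w * (x - w) \<le> (x - w) / \<mu>"
  proof (cases "w > 0")
    case True
    then show ?thesis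
      using af_water_level_stationary[OF assms(1-4)] unfolding w_def by simp
  next
    case False
    then have "w = 0" using \<open>w \<ge> 0\<close> by simp
    have "c * af_rate_deriv a B 0 * x \<le> 1 / \<mu> * x"
      using af_water_level_slack[OF assms(1-4)] \<open>w = 0\<close> \<open>x \<ge> 0\<close> unfolding w_def
      by (intro mult_right_mono)
    then show ?thesis using \<open>w = 0\<close> by simp
  qed
  ultimately show ?thesis by (simp add: diff_divide_distrib)
qed

lemma exists_sum_af_water_level_eq:
  assumes "finite I" "k0 \<in> I" "B k0 > 0" "c > 0" "P > 0"
    and "\<And>k. k \<in> I \<Longrightarrow> a k > 0" "\<And>k. k \<in> I \<Longrightarrow> B k \<ge> 0"
  shows "\<exists>\<mu>>0. (\<Sum>k\<in>I. af_water_level (a k) (B k) c \<mu>) = P"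
proof -
  define F where "F \<mu> = (\<Sum>k\<in>I. af_water_level (a k) (B k) c \<mu>)" for \<mu>
  define M where "M = (2 * a k0 * P + B k0 + 2)\<^sup>2 / (4 * c * a k0 * B k0)"
  have "a k0 > 0" using assms by simp
  then have "M \<ge> 0" unfolding M_def using assms(3,4) by simp
  have "continuous_on {0..M} F"
    unfolding F_def af_water_level_def by (intro continuous_intros)
  moreover have "F 0 = 0"
    unfolding F_def using assms(7) by (simp add: af_water_level_zero)
  moreover have "P \<le> F M"
  proof -
    have "P \<le> af_water_level (a k0) (B k0) c M"
      unfolding M_def using assms by (intro af_water_level_unbounded) auto
    also have "\<dots> \<le> F M"
      unfolding F_def using assms by (intro member_le_sum af_water_level_nonneg) auto
    finally show ?thesis .
  qed
  ultimately obtain \<mu> where "0 \<le> \<mu>" "F \<mu> = P"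
    using IVT'[of F 0 P M] \<open>M \<ge> 0\<close> \<open>P > 0\<close> by auto
  moreover have "\<mu> \<noteq> 0" using \<open>F 0 = 0\<close> \<open>F \<mu> = P\<close> \<open>P > 0\<close> by auto
  ultimately show ?thesis unfolding F_def by (intro exI[of _ \<mu>]) auto
qed

lemma concave_on_sum_af_rate:
  fixes a B :: "'n::finite \<Rightarrow> real"
  assumes "\<And>k. a k > 0" "\<And>k. B k \<ge> 0" "c \<ge> 0"
  shows "concave_on {q::real^'n. \<forall>k. 0 \<le> q$k} (\<lambda>q. \<Sum>k\<in>UNIV. c * af_rate (a k) (B k) (q$k))"
proof -
  have "concave_on {0..} (\<lambda>x. c * af_rate (a k) (B k) x)" for k
  proof -
    have "{0..} \<subseteq> {-1 / a k<..}"
      using assms(1)[of k] by (auto intro: less_le_trans[of _ 0])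
    with concave_on_af_rate[OF assms(1,2)] have "concave_on {0..} (af_rate (a k) (B k))"
      unfolding concave_on_def by (rule convex_on_subset) simp
    with \<open>c \<ge> 0\<close> show ?thesis by (rule concave_on_cmul)
  qed
  from concave_on_sum_components[of "{0..}", OF this] show ?thesis by simp
qed

lemma sum_af_rate_le_water_filling:
  assumes "finite I" "\<And>k. k \<in> I \<Longrightarrow> a k > 0" "\<And>k. k \<in> I \<Longrightarrow> B k \<ge> 0" "c > 0" "\<mu> > 0"
    and "\<And>k. k \<in> I \<Longrightarrow> 0 \<le> q k" "(\<Sum>k\<in>I. q k) \<le> (\<Sum>k\<in>I. af_water_level (a k) (B k) c \<mu>)"
  shows "(\<Sum>k\<in>I. c * af_rate (a k) (B k) (q k))
    \<le> (\<Sum>k\<in>I. c * af_rate (a k) (B k) (af_water_level (a k) (B k) c \<mu>))"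
proof (rule lagrangian_maximizer_optimal[where \<mu> = \<mu> and f = "\<lambda>k x. c * af_rate (a k) (B k) x"
      and w = "\<lambda>k. af_water_level (a k) (B k) c \<mu>"])
  show "c * af_rate (a k) (B k) x - x / \<mu>
      \<le> c * af_rate (a k) (B k) (af_water_level (a k) (B k) c \<mu>) - af_water_level (a k) (B k) c \<mu> / \<mu>"
    if "k \<in> I" "0 \<le> x" for k x
    using assms(2-5) that by (intro af_water_level_maximizes_lagrangian) auto
qed (use assms in auto)

lemma log_af_rate:
  assumes "0 \<le> X" "0 \<le> Y"
  shows "log 2 ((1 + X) * (1 + Y) / (1 + X + Y)) = (ln (1 + X) + ln (1 + Y) - ln (1 + X + Y)) / ln 2"
proof -
  have "0 < 1 + X" "0 < 1 + Y" "0 < 1 + X + Y" using assms by linarith+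
  then show ?thesis
    unfolding log_def by (simp add: ln_div ln_mult)
qed

lemma rate_eq_sum_af_rate:
  assumes "\<forall>k. 0 \<le> \<alpha>$k / s1 * q$k" "\<forall>k. 0 \<le> \<beta>$k / s2 * d$k"
  shows "rate eps s1 s2 \<alpha> \<beta> d q
    = (\<Sum>k\<in>UNIV. (1 - eps) / (2 * ln 2) * af_rate (\<alpha>$k / s1) (\<beta>$k / s2 * d$k) (q$k))"
  unfolding rate_def af_rate_def sum_distrib_left
  using assms by (intro sum.cong refl) (simp add: log_af_rate)

lemma qmu_eq_af_water_level:
  assumes "s1 > 0" "s2 > 0"
  shows "qmu eps s1 s2 \<alpha> \<beta> d \<mu> $ k
    = af_water_level (\<alpha>$k / s1) (\<beta>$k / s2 * d$k) ((1 - eps) / (2 * ln 2)) \<mu>"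
proof -
  have "2 * (1 - eps) * \<beta>$k * d$k * \<alpha>$k * \<mu> / (s1 * s2 * ln 2)
      = 4 * ((1 - eps) / (2 * ln 2)) * (\<alpha>$k / s1) * (\<beta>$k / s2 * d$k) * \<mu>"
    using assms by (simp add: field_simps)
  moreover have "s1 / (2 * \<alpha>$k) = 1 / (2 * (\<alpha>$k / s1))"
    using assms by simp
  ultimately show ?thesis
    unfolding qmu_def af_water_level_def by simp
qed

theorem mainTheorem3:
  fixes P s1 s2 eps :: real and \<alpha> \<beta> d :: "real^'n"
  assumes "P > 0" and "s1 > 0" and "s2 > 0"
    and "\<forall>k. \<alpha>$k > 0" and "\<forall>k. \<beta>$k > 0"
    and "\<forall>k. d$k \<ge> 0" and "\<exists>k. d$k > 0"
    and "0 \<le> eps" and "eps < 1"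
  shows "concave_on {q. \<forall>k. 0 \<le> q$k} (rate eps s1 s2 \<alpha> \<beta> d)
    \<and> (\<exists>\<mu>>0. (\<Sum>k\<in>UNIV. qmu eps s1 s2 \<alpha> \<beta> d \<mu> $ k) = P)
    \<and> (\<forall>\<mu>>0. (\<Sum>k\<in>UNIV. qmu eps s1 s2 \<alpha> \<beta> d \<mu> $ k) = P \<longrightarrow>
          feasible P (qmu eps s1 s2 \<alpha> \<beta> d \<mu>) \<and>
          (\<forall>q. feasible P q \<longrightarrow>
               rate eps s1 s2 \<alpha> \<beta> d q \<le> rate eps s1 s2 \<alpha> \<beta> d (qmu eps s1 s2 \<alpha> \<beta> d \<mu>)))"
proof -
  define a where "a k = \<alpha>$k / s1" for k
  define B where "B k = \<beta>$k / s2 * d$k" for k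
  define c where "c = (1 - eps) / (2 * ln 2)"
  have a: "a k > 0" and B: "B k \<ge> 0" for k
    using assms(2-6) by (simp_all add: a_def B_def less_imp_le)
  have "c > 0" using \<open>eps < 1\<close> by (simp add: c_def)
  obtain k0 where "d$k0 > 0" using assms(7) by blast
  then have "B k0 > 0" using assms(3,5) by (simp add: B_def)
  have rate: "rate eps s1 s2 \<alpha> \<beta> d q = (\<Sum>k\<in>UNIV. c * af_rate (a k) (B k) (q$k))"
    if "\<forall>k. 0 \<le> q$k" for q
  proof -
    have "\<forall>k. 0 \<le> a k * q$k" using a that by (simp add: less_imp_le)
    then show ?thesis
      using B unfolding a_def B_def c_def by (intro rate_eq_sum_af_rate) auto
  qed
  have qmu: "qmu eps s1 s2 \<alpha> \<beta> d \<mu> $ k = af_water_level (a k) (B k) c \<mu>" for \<mu> k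
    using assms(2,3) by (simp add: qmu_eq_af_water_level a_def B_def c_def)
  have "concave_on {q. \<forall>k. 0 \<le> q$k} (\<lambda>q. \<Sum>k\<in>UNIV. c * af_rate (a k) (B k) (q$k))"
    using a B \<open>c > 0\<close> by (intro concave_on_sum_af_rate) auto
  then have "concave_on {q. \<forall>k. 0 \<le> q$k} (rate eps s1 s2 \<alpha> \<beta> d)"
    by (subst concave_on_cong[OF refl rate]) auto
  moreover have "\<exists>\<mu>>0. (\<Sum>k\<in>UNIV. qmu eps s1 s2 \<alpha> \<beta> d \<mu> $ k) = P"
    using exists_sum_af_water_level_eq[of UNIV k0 B c P a] \<open>B k0 > 0\<close> \<open>c > 0\<close> a B assms(1)
    by (simp add: qmu)
  moreover have "feasible P (qmu eps s1 s2 \<alpha> \<beta> d \<mu>)"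
    if "(\<Sum>k\<in>UNIV. qmu eps s1 s2 \<alpha> \<beta> d \<mu> $ k) = P" for \<mu>
    using that a by (simp add: feasible_def qmu af_water_level_nonneg)
  moreover have "rate eps s1 s2 \<alpha> \<beta> d q \<le> rate eps s1 s2 \<alpha> \<beta> d (qmu eps s1 s2 \<alpha> \<beta> d \<mu>)"
    if "\<mu> > 0" "(\<Sum>k\<in>UNIV. qmu eps s1 s2 \<alpha> \<beta> d \<mu> $ k) = P" "feasible P q" for \<mu> q
    using that sum_af_rate_le_water_filling[of UNIV a B c \<mu> "\<lambda>k. q$k"] a B \<open>c > 0\<close>
    by (simp add: rate qmu feasible_def af_water_level_nonneg)
  ultimately show ?thesis by blast
qed

end
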